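(* Let $(M,g)$ be a $d$-dimensional Lorentzian manifold with $d>5$, $p\in M$, and $\{\ell,n,m^3,\dots,m^d\}$ a null frame at $p$. Suppose the Weyl tensor $C$ at $p$ is invariant under the subgroup of the Lorentz group that fixes $\ell$, $n$ and $m^3$ and acts as $SO(d-3)$, in its standard representation, on $\mathrm{span}\{m^4,\dots,m^d\}$. Let $\kappa=\mathrm{diag}(d-3,-1,-1,\dots,-1)$ be the $(d-2)\times(d-2)$ diagonal matrix (indexed by $3,\dots,d$). Then in this frame there are real numbers $\check\lambda_1,\hat\lambda_1,\check v,\hat v,s,\bar R$ such that $\check H=\check\lambda_1\kappa$, $\check T=0$, $\check v^i=\delta^i_3\check v$; $A_{ij}=0$, $\bar S=s\kappa$, $\bar C_{ijkl}=0$ (with $\bar R$ arbitrary); $\hat H=\hat\lambda_1\kappa$, $\hat T=0$, $\hat v^i=\delta^i_3\hat v$.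
   Context: Null frame convention: $g=2\,\ell\, n+\delta_{ij}m^im^j$, i.e. $g(\ell,n)=1$, $g(m^i,m^j)=\delta_{ij}$, all other products zero. Frame indices: $0$ refers to $\ell$, $1$ to $n$, $i,j,k,l\in\{3,\dots,d\}$ to the $m^i$; let $N=d-2$. $C_{abcd}$ are the frame components of the Weyl tensor. Definitions: $\hat H_{ij}=C_{0i0j}$, $\check H_{ij}=C_{1i1j}$ (symmetric, traceless matrices); $A_{ij}=C_{01ij}$; $\bar R_{ij}=\sum_k C_{kikj}$, $\bar R=\sum_i\bar R_{ii}$, $\bar S_{ij}=\bar R_{ij}-\frac1N\bar R\delta_{ij}$; $\bar C_{ijkl}$ is the Weyl (totally trace-free) part of the algebraic curvature tensor $C_{ijkl}$ on $\mathbb R^N$. The tensor $C_{1ijk}$ (antisymmetric in $j,k$) decomposes uniquely as $C_{1ijk}=\delta_{ij}\check v_k-\delta_{ik}\check v_j+\check T_{ijk}$ with $\sum_i\check T_{iji}=0$ and $\check T_{(ijk)}=0$ (so $\check v_k=\frac{1}{N-1}\sum_i C_{1iik}$); likewise $C_{0ijk}=\delta_{ij}\hat v_k-\delta_{ik}\hat v_j+\hat T_{ijk}$ with $\hat T$ of the same type. *)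

theory Defs
  imports Complex_Main "HOL-Combinatorics.Permutations"
begin

type_synonym tensor4 = "nat \<Rightarrow> nat \<Rightarrow> nat \<Rightarrow> nat \<Rightarrow> real"

text \<open>Frame indices: 0 = l, 1 = n, 3..d = m^3..m^d (index 2 unused).\<close>
definition fidx :: "nat \<Rightarrow> nat set" where
  "fidx d = {0, 1} \<union> {3..d}"

definition sidx :: "nat \<Rightarrow> nat set" where
  "sidx d = {3..d}"

text \<open>Frame components of the (inverse) metric g = 2 l n + sum m^i m^i.\<close>
definition gfr :: "nat \<Rightarrow> nat \<Rightarrow> real" where
  "gfr a b = (if (a = 0 \<and> b = 1) \<or> (a = 1 \<and> b = 0) then 1
              else if a = b \<and> 3 \<le> a then 1 else 0)"

definition kdelta :: "nat \<Rightarrow> nat \<Rightarrow> real" where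
  "kdelta i j = (if i = j then 1 else 0)"

definition is_weyl :: "nat \<Rightarrow> tensor4 \<Rightarrow> bool" where
  "is_weyl d C \<longleftrightarrow>
     (\<forall>a\<in>fidx d. \<forall>b\<in>fidx d. \<forall>c\<in>fidx d. \<forall>e\<in>fidx d.
        C a b c e = - C b a c e \<and> C a b c e = - C a b e c \<and>
        C a b c e = C c e a b \<and> C a b c e + C a c e b + C a e b c = 0) \<and>
     (\<forall>b\<in>fidx d. \<forall>e\<in>fidx d.
        (\<Sum>a\<in>fidx d. \<Sum>c\<in>fidx d. gfr a c * C a b c e) = 0)"

definition det_on :: "nat set \<Rightarrow> (nat \<Rightarrow> nat \<Rightarrow> real) \<Rightarrow> real" where
  "det_on S Q = (\<Sum>p | p permutes S. of_int (sign p) * (\<Prod>i\<in>S. Q i (p i)))"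

definition rotation_on :: "nat set \<Rightarrow> (nat \<Rightarrow> nat \<Rightarrow> real) \<Rightarrow> bool" where
  "rotation_on S Q \<longleftrightarrow>
     (\<forall>i\<in>S. \<forall>j\<in>S. (\<Sum>k\<in>S. Q i k * Q j k) = kdelta i j) \<and> det_on S Q = 1"

definition lift :: "nat \<Rightarrow> (nat \<Rightarrow> nat \<Rightarrow> real) \<Rightarrow> nat \<Rightarrow> nat \<Rightarrow> real" where
  "lift d Q a b = (if a \<in> {4..d} \<and> b \<in> {4..d} then Q a b else kdelta a b)"

definition so_invariant :: "nat \<Rightarrow> tensor4 \<Rightarrow> bool" where
  "so_invariant d C \<longleftrightarrow>
     (\<forall>Q. rotation_on {4..d} Q \<longrightarrow>
       (\<forall>a\<in>fidx d. \<forall>b\<in>fidx d. \<forall>c\<in>fidx d. \<forall>e\<in>fidx d.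
          C a b c e = (\<Sum>f\<in>fidx d. \<Sum>g\<in>fidx d. \<Sum>h\<in>fidx d. \<Sum>k\<in>fidx d.
             lift d Q a f * lift d Q b g * lift d Q c h * lift d Q e k * C f g h k)))"

definition Nd :: "nat \<Rightarrow> real" where "Nd d = real d - 2"

definition kappa :: "nat \<Rightarrow> nat \<Rightarrow> nat \<Rightarrow> real" where
  "kappa d i j = (if i = j then (if i = 3 then real d - 3 else -1) else 0)"

definition Hhat :: "tensor4 \<Rightarrow> nat \<Rightarrow> nat \<Rightarrow> real" where "Hhat C i j = C 0 i 0 j"
definition Hcheck :: "tensor4 \<Rightarrow> nat \<Rightarrow> nat \<Rightarrow> real" where "Hcheck C i j = C 1 i 1 j"
definition Amat :: "tensor4 \<Rightarrow> nat \<Rightarrow> nat \<Rightarrow> real" where "Amat C i j = C 0 1 i j"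

definition vcheck :: "nat \<Rightarrow> tensor4 \<Rightarrow> nat \<Rightarrow> real" where
  "vcheck d C k = (1 / (Nd d - 1)) * (\<Sum>i\<in>sidx d. C 1 i i k)"
definition Tcheck :: "nat \<Rightarrow> tensor4 \<Rightarrow> nat \<Rightarrow> nat \<Rightarrow> nat \<Rightarrow> real" where
  "Tcheck d C i j k = C 1 i j k - kdelta i j * vcheck d C k + kdelta i k * vcheck d C j"
definition vhat :: "nat \<Rightarrow> tensor4 \<Rightarrow> nat \<Rightarrow> real" where
  "vhat d C k = (1 / (Nd d - 1)) * (\<Sum>i\<in>sidx d. C 0 i i k)"
definition That :: "nat \<Rightarrow> tensor4 \<Rightarrow> nat \<Rightarrow> nat \<Rightarrow> nat \<Rightarrow> real" where
  "That d C i j k = C 0 i j k - kdelta i j * vhat d C k + kdelta i k * vhat d C j"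

definition Rbar :: "nat \<Rightarrow> tensor4 \<Rightarrow> nat \<Rightarrow> nat \<Rightarrow> real" where
  "Rbar d C i j = (\<Sum>k\<in>sidx d. C k i k j)"
definition Rbar_sc :: "nat \<Rightarrow> tensor4 \<Rightarrow> real" where
  "Rbar_sc d C = (\<Sum>i\<in>sidx d. Rbar d C i i)"
definition Sbar :: "nat \<Rightarrow> tensor4 \<Rightarrow> nat \<Rightarrow> nat \<Rightarrow> real" where
  "Sbar d C i j = Rbar d C i j - Rbar_sc d C / Nd d * kdelta i j"

text \<open>Weyl (totally trace-free) part of C_{ijkl} on R^N.\<close>
definition Cbar :: "nat \<Rightarrow> tensor4 \<Rightarrow> nat \<Rightarrow> nat \<Rightarrow> nat \<Rightarrow> nat \<Rightarrow> real" where
  "Cbar d C i j k l = C i j k l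
     - (1 / (Nd d - 2)) * (kdelta i k * Rbar d C j l - kdelta i l * Rbar d C j k
                          - kdelta j k * Rbar d C i l + kdelta j l * Rbar d C i k)
     + Rbar_sc d C / ((Nd d - 1) * (Nd d - 2)) * (kdelta i k * kdelta j l - kdelta i l * kdelta j k)"

end

theory Submission
  imports Defs
begin

text \<open>Only a finite subgroup of \<open>SO(d-3)\<close> is used: the signed permutation matrices of
  determinant one on \<open>span{m\<^sup>4,\<dots>,m\<^sup>d}\<close>. The reflection in two axes \<open>x, y\<close> kills every
  component in which \<open>x\<close> occurs an odd number of times and \<open>y\<close> does not occur; as \<open>d - 3 \<ge> 3\<close>,
  such a spare axis \<open>y\<close> always exists. A transposition of two axes composed with one reflection
  identifies components that differ by a relabelling of the axes. Together with the algebraic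
  symmetries, the Bianchi identity and tracelessness of \<open>C\<close>, this leaves in each null block
  only \<open>C\<^sub>t\<^sub>4\<^sub>t\<^sub>4\<close> and \<open>C\<^sub>t\<^sub>4\<^sub>4\<^sub>3\<close> (\<open>t \<in> {\<ell>, n}\<close>), kills \<open>A\<close>, and makes the spatial block the
  tensor \<open>\<beta> P \<owedge> P + \<alpha> (u \<otimes> u) \<owedge> P\<close>, whose Weyl part vanishes identically.\<close>

definition signed_perm_matrix :: "(nat \<Rightarrow> nat) \<Rightarrow> (nat \<Rightarrow> real) \<Rightarrow> nat \<Rightarrow> nat \<Rightarrow> real" where
  "signed_perm_matrix \<sigma> \<epsilon> i j = (if j = \<sigma> i then \<epsilon> i else 0)"

lemma det_on_signed_perm_matrix:
  assumes fin: "finite B" and \<sigma>: "\<sigma> permutes B"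
  shows "det_on B (signed_perm_matrix \<sigma> \<epsilon>) = of_int (sign \<sigma>) * prod \<epsilon> B"
proof -
  let ?term = "\<lambda>p. of_int (sign p) * (\<Prod>i\<in>B. signed_perm_matrix \<sigma> \<epsilon> i (p i))"
  have others: "?term p = 0" if p: "p permutes B" "p \<noteq> \<sigma>" for p
  proof -
    obtain i where "i \<in> B" "p i \<noteq> \<sigma> i"
      using p \<sigma> by (metis permutes_not_in ext)
    then have "(\<Prod>i\<in>B. signed_perm_matrix \<sigma> \<epsilon> i (p i)) = 0"
      using fin by (intro prod_zero) (auto simp: signed_perm_matrix_def)
    then show ?thesis by simp
  qed
  have "det_on B (signed_perm_matrix \<sigma> \<epsilon>) = ?term \<sigma> + sum ?term ({p. p permutes B} - {\<sigma>})"
    unfolding det_on_def using \<sigma> by (simp add: sum.remove[OF finite_permutations[OF fin]])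
  also have "sum ?term ({p. p permutes B} - {\<sigma>}) = 0"
    using others by (intro sum.neutral) auto
  also have "?term \<sigma> = of_int (sign \<sigma>) * prod \<epsilon> B"
    by (simp add: signed_perm_matrix_def)
  finally show ?thesis by simp
qed

lemma rotation_on_signed_perm_matrix:
  assumes fin: "finite B" and \<sigma>: "\<sigma> permutes B" and unit: "\<forall>i\<in>B. \<epsilon> i = 1 \<or> \<epsilon> i = -1"
    and det: "of_int (sign \<sigma>) * prod \<epsilon> B = 1"
  shows "rotation_on B (signed_perm_matrix \<sigma> \<epsilon>)"
  unfolding rotation_on_def
proof (intro conjI ballI)
  show "det_on B (signed_perm_matrix \<sigma> \<epsilon>) = 1"
    using det_on_signed_perm_matrix[OF fin \<sigma>] det by simp
next
  fix i j assume i: "i \<in> B" and "j \<in> B"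
  have "\<sigma> i \<in> B" using \<sigma> i by (simp add: permutes_in_image)
  moreover have "\<sigma> i = \<sigma> j \<longleftrightarrow> i = j" using \<sigma> by (metis permutes_inj injD)
  moreover have "\<epsilon> i * \<epsilon> i = 1" using unit i by auto
  ultimately show "(\<Sum>k\<in>B. signed_perm_matrix \<sigma> \<epsilon> i k * signed_perm_matrix \<sigma> \<epsilon> j k) = kdelta i j"
    using fin by (auto simp: signed_perm_matrix_def kdelta_def if_distrib[of "\<lambda>u. u * _"] cong: if_cong)
qed

lemma sum_signed_perm_matrix:
  assumes "finite A" and "\<sigma> i \<in> A"
  shows "(\<Sum>j\<in>A. signed_perm_matrix \<sigma> \<epsilon> i j * X j) = \<epsilon> i * X (\<sigma> i)"
  using assms by (simp add: signed_perm_matrix_def if_distrib[of "\<lambda>u. u * _"] cong: if_cong)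

lemma lift_signed_perm_matrix:
  assumes \<sigma>: "\<sigma> permutes {4..d}" and outside: "\<forall>i. i \<notin> {4..d} \<longrightarrow> \<epsilon> i = 1"
  shows "lift d (signed_perm_matrix \<sigma> \<epsilon>) = signed_perm_matrix \<sigma> \<epsilon>"
proof (intro ext)
  fix i j
  show "lift d (signed_perm_matrix \<sigma> \<epsilon>) i j = signed_perm_matrix \<sigma> \<epsilon> i j"
  proof (cases "i \<in> {4..d}")
    case True
    then have "\<sigma> i \<in> {4..d}" using \<sigma> by (metis permutes_in_image)
    then show ?thesis using True by (auto simp: lift_def signed_perm_matrix_def kdelta_def)
  next
    case False
    then have "\<sigma> i = i" using \<sigma> by (simp add: permutes_not_in)
    then show ?thesis using False outside by (auto simp: lift_def signed_perm_matrix_def kdelta_def)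
  qed
qed

lemma so_invariant_signed_perm:
  assumes inv: "so_invariant d C"
    and \<sigma>: "\<sigma> permutes {4..d}" and unit: "\<forall>i\<in>{4..d}. \<epsilon> i = 1 \<or> \<epsilon> i = -1"
    and outside: "\<forall>i. i \<notin> {4..d} \<longrightarrow> \<epsilon> i = 1"
    and det: "of_int (sign \<sigma>) * prod \<epsilon> {4..d} = 1"
    and indices: "a \<in> fidx d" "b \<in> fidx d" "c \<in> fidx d" "e \<in> fidx d"
  shows "C a b c e = \<epsilon> a * \<epsilon> b * \<epsilon> c * \<epsilon> e * C (\<sigma> a) (\<sigma> b) (\<sigma> c) (\<sigma> e)"
proof -
  let ?M = "signed_perm_matrix \<sigma> \<epsilon>"
  have fin: "finite (fidx d)" by (simp add: fidx_def)
  have "\<sigma> permutes fidx d" using \<sigma> by (rule permutes_subset) (auto simp: fidx_def)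
  then have closed: "\<And>i. \<sigma> i \<in> fidx d \<longleftrightarrow> i \<in> fidx d" by (simp add: permutes_in_image)
  have "rotation_on {4..d} ?M"
    using \<sigma> unit det by (intro rotation_on_signed_perm_matrix) auto
  then have "C a b c e = (\<Sum>f\<in>fidx d. \<Sum>g\<in>fidx d. \<Sum>h\<in>fidx d. \<Sum>k\<in>fidx d.
      lift d ?M a f * lift d ?M b g * lift d ?M c h * lift d ?M e k * C f g h k)"
    using inv indices unfolding so_invariant_def by blast
  also have "\<dots> = (\<Sum>f\<in>fidx d. ?M a f * (\<Sum>g\<in>fidx d. ?M b g *
      (\<Sum>h\<in>fidx d. ?M c h * (\<Sum>k\<in>fidx d. ?M e k * C f g h k))))"
    by (simp add: lift_signed_perm_matrix[OF \<sigma> outside] sum_distrib_left mult.assoc)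
  also have "\<dots> = \<epsilon> a * (\<epsilon> b * (\<epsilon> c * (\<epsilon> e * C (\<sigma> a) (\<sigma> b) (\<sigma> c) (\<sigma> e))))"
    using indices by (simp add: sum_signed_perm_matrix[OF fin] closed)
  finally show ?thesis by (simp add: mult.assoc)
qed

lemma sum_gfr:
  assumes "a \<in> fidx d"
  shows "(\<Sum>c\<in>fidx d. gfr a c * Y c) = Y (if a = 0 then 1 else if a = 1 then 0 else a)"
proof -
  let ?a' = "if a = 0 then 1 else if a = 1 then 0 else a"
  have "(\<Sum>c\<in>fidx d. gfr a c * Y c) = (\<Sum>c\<in>fidx d. if c = ?a' then Y ?a' else 0)"
    using assms by (intro sum.cong) (auto simp: gfr_def fidx_def)
  also have "\<dots> = Y ?a'"
    using assms by (auto simp: fidx_def)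
  finally show ?thesis .
qed

locale algebraic_weyl =
  fixes d :: nat and C :: tensor4
  assumes weyl: "is_weyl d C"
begin

lemma antisym_left:
  "a \<in> fidx d \<Longrightarrow> b \<in> fidx d \<Longrightarrow> c \<in> fidx d \<Longrightarrow> e \<in> fidx d \<Longrightarrow> C a b c e = - C b a c e"
  using weyl unfolding is_weyl_def by blast

lemma antisym_right:
  "a \<in> fidx d \<Longrightarrow> b \<in> fidx d \<Longrightarrow> c \<in> fidx d \<Longrightarrow> e \<in> fidx d \<Longrightarrow> C a b c e = - C a b e c"
  using weyl unfolding is_weyl_def by blast

lemma pair_sym:
  "a \<in> fidx d \<Longrightarrow> b \<in> fidx d \<Longrightarrow> c \<in> fidx d \<Longrightarrow> e \<in> fidx d \<Longrightarrow> C a b c e = C c e a b"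
  using weyl unfolding is_weyl_def by blast

lemma first_bianchi:
  "a \<in> fidx d \<Longrightarrow> b \<in> fidx d \<Longrightarrow> c \<in> fidx d \<Longrightarrow> e \<in> fidx d \<Longrightarrow>
    C a b c e + C a c e b + C a e b c = 0"
  using weyl unfolding is_weyl_def by blast

lemma swap_both_pairs:
  "a \<in> fidx d \<Longrightarrow> b \<in> fidx d \<Longrightarrow> c \<in> fidx d \<Longrightarrow> e \<in> fidx d \<Longrightarrow> C a b c e = C b a e c"
  using antisym_left[of a b c e] antisym_right[of b a c e] by simp

lemma zero_if_first_pair_eq: "a \<in> fidx d \<Longrightarrow> c \<in> fidx d \<Longrightarrow> e \<in> fidx d \<Longrightarrow> C a a c e = 0"
  using antisym_left[of a a c e] by simp

lemma zero_if_second_pair_eq: "a \<in> fidx d \<Longrightarrow> b \<in> fidx d \<Longrightarrow> c \<in> fidx d \<Longrightarrow> C a b c c = 0"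
  using antisym_right[of a b c c] by simp

lemma trace_free:
  assumes b: "b \<in> fidx d" and e: "e \<in> fidx d"
  shows "C 0 b 1 e + C 1 b 0 e + (\<Sum>i\<in>{3..d}. C i b i e) = 0"
proof -
  let ?partner = "\<lambda>a::nat. if a = 0 then 1 else if a = 1 then 0 else a"
  have split: "(\<Sum>a\<in>fidx d. C a b (?partner a) e) = C 0 b 1 e + C 1 b 0 e + (\<Sum>i\<in>{3..d}. C i b i e)"
  proof -
    have "fidx d = insert 0 (insert 1 {3..d})"
      by (auto simp: fidx_def)
    moreover have "(\<Sum>a\<in>{3..d}. C a b (?partner a) e) = (\<Sum>i\<in>{3..d}. C i b i e)"
      by (intro sum.cong) auto
    ultimately show ?thesis
      by simp
  qed
  have "\<forall>b\<in>fidx d. \<forall>e\<in>fidx d. (\<Sum>a\<in>fidx d. \<Sum>c\<in>fidx d. gfr a c * C a b c e) = 0"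
    using weyl unfolding is_weyl_def by blast
  then have "0 = (\<Sum>a\<in>fidx d. \<Sum>c\<in>fidx d. gfr a c * C a b c e)"
    using b e by simp
  also have "\<dots> = (\<Sum>a\<in>fidx d. C a b (?partner a) e)"
    by (intro sum.cong) (simp_all add: sum_gfr)
  finally show ?thesis
    using split by simp
qed

end

definition axis_sign :: "nat \<Rightarrow> nat \<Rightarrow> real" where
  "axis_sign x i = (if i = x then -1 else 1)"

lemma prod_axis_sign:
  assumes "finite A" and "x \<in> A"
  shows "prod (axis_sign x) A = -1"
proof -
  have "prod (axis_sign x) A = axis_sign x x * prod (axis_sign x) (A - {x})"
    using assms by (rule prod.remove)
  also have "prod (axis_sign x) (A - {x}) = 1"
    by (intro prod.neutral) (simp add: axis_sign_def)
  finally show ?thesis by (simp add: axis_sign_def)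
qed

definition transverse_proj :: "nat \<Rightarrow> nat \<Rightarrow> real" where
  "transverse_proj i j = kdelta i j - kdelta i 3 * kdelta j 3"

text \<open>The tensor \<open>\<beta> P \<owedge> P + \<alpha> (u \<otimes> u) \<owedge> P\<close> (Kulkarni--Nomizu products), where \<open>u = m\<^sup>3\<close> and
  \<open>P\<close> is the projector onto \<open>span{m\<^sup>4,\<dots>,m\<^sup>d}\<close>.\<close>
definition invariant_curv :: "real \<Rightarrow> real \<Rightarrow> nat \<Rightarrow> nat \<Rightarrow> nat \<Rightarrow> nat \<Rightarrow> real" where
  "invariant_curv \<alpha> \<beta> i j k l =
     \<beta> * (transverse_proj i k * transverse_proj j l - transverse_proj i l * transverse_proj j k)
     + \<alpha> * (kdelta i 3 * kdelta k 3 * transverse_proj j l + kdelta j 3 * kdelta l 3 * transverse_proj i k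
            - kdelta i 3 * kdelta l 3 * transverse_proj j k - kdelta j 3 * kdelta k 3 * transverse_proj i l)"

text \<open>The Weyl part of \<open>invariant_curv \<alpha> \<beta>\<close> on \<open>\<real>\<^sup>n\<^sup>+\<^sup>1\<close>, written out with its Ricci tensor
  (see \<open>Rbar_spatial\<close>); \<open>dik\<close> stands for \<open>\<delta>\<^sub>i\<^sub>k\<close>, \<open>ui\<close> for \<open>\<delta>\<^sub>i\<^sub>3\<close> and \<open>Pik\<close> for \<open>transverse_proj i k\<close>.\<close>
lemma weyl_part_invariant_curv_zero:
  fixes n \<alpha> \<beta> dik djl dil djk ui uj uk ul :: real
  assumes "n \<noteq> 0" and "n - 1 \<noteq> 0"
  defines "Pik \<equiv> dik - ui * uk" and "Pjl \<equiv> djl - uj * ul"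
    and "Pil \<equiv> dil - ui * ul" and "Pjk \<equiv> djk - uj * uk"
  shows "\<beta> * (Pik * Pjl - Pil * Pjk) + \<alpha> * (ui * uk * Pjl + uj * ul * Pik - ui * ul * Pjk - uj * uk * Pil)
     - (1 / ((n + 1) - 2)) * (dik * (((n - 1) * \<beta> + \<alpha>) * Pjl + n * \<alpha> * uj * ul)
         - dil * (((n - 1) * \<beta> + \<alpha>) * Pjk + n * \<alpha> * uj * uk)
         - djk * (((n - 1) * \<beta> + \<alpha>) * Pil + n * \<alpha> * ui * ul)
         + djl * (((n - 1) * \<beta> + \<alpha>) * Pik + n * \<alpha> * ui * uk))
     + (n * \<alpha> + n * ((n - 1) * \<beta> + \<alpha>)) / (((n + 1) - 1) * ((n + 1) - 2)) * (dik * djl - dil * djk) = 0"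
  using assms by (simp add: field_simps)

locale so_invariant_weyl = algebraic_weyl +
  assumes dim: "5 < d" and invariant: "so_invariant d C"
begin

lemma spatial_indices_eq_insert: "{3..d} = insert 3 {4..d}"
  using dim by auto

lemma sum_axes_const: "(\<Sum>i\<in>{4..d}. c) = (real d - 3) * c"
  using dim by (simp add: of_nat_diff)

lemma spare_axis:
  obtains y where "y \<in> {4..d}" "y \<noteq> u" "y \<noteq> v"
proof -
  have "\<exists>y::nat. (y = 4 \<or> y = 5 \<or> y = 6) \<and> y \<noteq> u \<and> y \<noteq> v" by presburger
  then obtain y :: nat where y: "y = 4 \<or> y = 5 \<or> y = 6" "y \<noteq> u" "y \<noteq> v" by blast
  moreover have "y \<in> {4..d}" using y(1) dim by auto
  ultimately show ?thesis using that by blast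
qed

lemma reflection_invariance:
  assumes x: "x \<in> {4..d}" and y: "y \<in> {4..d}" and "x \<noteq> y"
    and indices: "a \<in> fidx d" "b \<in> fidx d" "c \<in> fidx d" "e \<in> fidx d"
  shows "C a b c e = (axis_sign x a * axis_sign x b * axis_sign x c * axis_sign x e)
    * (axis_sign y a * axis_sign y b * axis_sign y c * axis_sign y e) * C a b c e"
proof -
  let ?\<epsilon> = "\<lambda>i. axis_sign x i * axis_sign y i"
  have "prod ?\<epsilon> {4..d} = 1"
    using x y by (simp add: prod.distrib prod_axis_sign)
  then have "C a b c e = ?\<epsilon> a * ?\<epsilon> b * ?\<epsilon> c * ?\<epsilon> e * C (id a) (id b) (id c) (id e)"
    by (intro so_invariant_signed_perm[OF invariant permutes_id])
      (use x y indices \<open>x \<noteq> y\<close> in \<open>auto simp: axis_sign_def\<close>)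
  then show ?thesis by (simp only: id_apply ac_simps)
qed

text \<open>The reflection in \<open>x\<close> and in a spare axis \<open>y\<close> multiplies such a component by \<open>-1\<close>.\<close>
lemma vanishes_if_odd_in_axis:
  assumes x: "x \<in> {4..d}" and z: "z \<in> fidx d"
    and indices: "a \<in> {0, 1, 3, x, z}" "b \<in> {0, 1, 3, x, z}" "c \<in> {0, 1, 3, x, z}" "e \<in> {0, 1, 3, x, z}"
    and odd: "axis_sign x a * axis_sign x b * axis_sign x c * axis_sign x e = -1"
  shows "C a b c e = 0"
proof -
  obtain y where y: "y \<in> {4..d}" "y \<noteq> x" "y \<noteq> z" by (rule spare_axis)
  have "{0, 1, 3, x, z} \<subseteq> fidx d"
    using x z dim by (auto simp: fidx_def)
  then have in_fidx: "a \<in> fidx d" "b \<in> fidx d" "c \<in> fidx d" "e \<in> fidx d"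
    using indices by auto
  have "y \<notin> {0, 1, 3, x, z}"
    using y by auto
  then have "a \<noteq> y" "b \<noteq> y" "c \<noteq> y" "e \<noteq> y"
    using indices by auto
  then have even_y: "axis_sign y a * axis_sign y b * axis_sign y c * axis_sign y e = 1"
    by (simp add: axis_sign_def)
  have "C a b c e = -1 * 1 * C a b c e"
    using reflection_invariance[OF x y(1) y(2)[symmetric] in_fidx] unfolding odd even_y .
  then show ?thesis by simp
qed

lemma swap_invariance:
  assumes x: "x \<in> {4..d}" and y: "y \<in> {4..d}" and "x \<noteq> y"
    and indices: "a \<in> fidx d" "b \<in> fidx d" "c \<in> fidx d" "e \<in> fidx d"
  shows "C a b c e = axis_sign y a * axis_sign y b * axis_sign y c * axis_sign y e
    * C (transpose x y a) (transpose x y b) (transpose x y c) (transpose x y e)"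
proof (rule so_invariant_signed_perm[OF invariant permutes_swap_id[OF x y] _ _ _ indices])
  show "of_int (sign (transpose x y)) * prod (axis_sign y) {4..d} = 1"
    using y \<open>x \<noteq> y\<close> by (simp add: sign_swap_id prod_axis_sign)
  show "\<forall>i\<in>{4..d}. axis_sign y i = 1 \<or> axis_sign y i = -1"
    by (simp add: axis_sign_def)
  show "\<forall>i. i \<notin> {4..d} \<longrightarrow> axis_sign y i = 1"
    using y by (auto simp: axis_sign_def)
qed

lemma pair_swap_invariance:
  assumes "x \<in> {4..d}" and "y \<in> {4..d}" and "a \<in> fidx d" and "b \<in> fidx d"
  shows "C a b a b = C (transpose x y a) (transpose x y b) (transpose x y a) (transpose x y b)"
proof (cases "x = y")
  case False
  then show ?thesis
    using swap_invariance[OF assms(1,2) False assms(3,4,3,4)] by (simp add: axis_sign_def)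
qed simp

lemma null_H_offdiag:
  assumes t: "t \<in> {0, 1}" and i: "i \<in> {3..d}" and j: "j \<in> {3..d}" and "i \<noteq> j"
  shows "C t i t j = 0"
proof -
  have "j \<in> {4..d} \<or> i \<in> {4..d}" using i j \<open>i \<noteq> j\<close> by auto
  then show ?thesis
  proof
    assume "j \<in> {4..d}"
    then show ?thesis
      using t i \<open>i \<noteq> j\<close> by (intro vanishes_if_odd_in_axis[of j i]) (auto simp: axis_sign_def fidx_def)
  next
    assume "i \<in> {4..d}"
    then show ?thesis
      using t j \<open>i \<noteq> j\<close> by (intro vanishes_if_odd_in_axis[of i j]) (auto simp: axis_sign_def fidx_def)
  qed
qed

lemma pair_component_eq_axis4:
  assumes a: "a \<in> {0, 1, 3}" and x: "x \<in> {4..d}"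
  shows "C a x a x = C a 4 a 4"
proof -
  have "(4::nat) \<in> {4..d}" using dim by auto
  then have "C a x a x = C (transpose x 4 a) (transpose x 4 x) (transpose x 4 a) (transpose x 4 x)"
    using a x dim by (intro pair_swap_invariance[OF x]) (auto simp: fidx_def)
  also have "transpose x 4 a = a" using a x by auto
  finally show ?thesis by simp
qed

lemma null_H_33:
  assumes t: "t \<in> {0, 1}"
  shows "C t 3 t 3 = - (real d - 3) * C t 4 t 4"
proof -
  have t_fidx: "t \<in> fidx d" using t by (auto simp: fidx_def)
  have "C 0 t 1 t + C 1 t 0 t = 0"
    using t zero_if_first_pair_eq zero_if_second_pair_eq by (auto simp: fidx_def)
  then have "0 = (\<Sum>i\<in>{3..d}. C i t i t)"
    using trace_free[OF t_fidx t_fidx] by simp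
  also have "\<dots> = (\<Sum>i\<in>{3..d}. C t i t i)"
    using t_fidx by (intro sum.cong refl swap_both_pairs) (auto simp: fidx_def)
  also have "\<dots> = C t 3 t 3 + (\<Sum>i\<in>{4..d}. C t i t i)"
    by (simp add: spatial_indices_eq_insert)
  also have "(\<Sum>i\<in>{4..d}. C t i t i) = (\<Sum>i\<in>{4..d}. C t 4 t 4)"
    using t by (intro sum.cong refl pair_component_eq_axis4) auto
  also have "\<dots> = (real d - 3) * C t 4 t 4"
    by (rule sum_axes_const)
  finally show ?thesis
    by linarith
qed

lemma null_H:
  assumes t: "t \<in> {0, 1}" and i: "i \<in> {3..d}" and j: "j \<in> {3..d}"
  shows "C t i t j = - C t 4 t 4 * kappa d i j"
proof -
  consider "i \<noteq> j" | "i = j" "i = 3" | "i = j" "i \<in> {4..d}" using i by force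
  then show ?thesis
  proof cases
    case 1
    then show ?thesis using null_H_offdiag[OF t i j] by (simp add: kappa_def)
  next
    case 2
    then show ?thesis using null_H_33[OF t] by (simp add: kappa_def algebra_simps)
  next
    case 3
    then show ?thesis using t pair_component_eq_axis4[of t i] by (auto simp: kappa_def)
  qed
qed

lemma null_v_axis:
  assumes t: "t \<in> {0, 1}" and x: "x \<in> {4..d}"
  shows "C t x x 3 = C t 4 4 3"
proof (cases "x = 4")
  case False
  have "(4::nat) \<in> {4..d}" using dim by auto
  then have swap: "C t x x 3 = axis_sign 4 t * axis_sign 4 x * axis_sign 4 x * axis_sign 4 3
      * C (transpose x 4 t) (transpose x 4 x) (transpose x 4 x) (transpose x 4 3)"
    using t x dim by (intro swap_invariance[OF x _ False]) (auto simp: fidx_def)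
  have "transpose x 4 t = t" "transpose x 4 3 = 3" using t x by auto
  moreover have "axis_sign 4 t = 1" using t by (auto simp: axis_sign_def)
  ultimately show ?thesis using swap False by (simp add: axis_sign_def)
qed simp

lemma null_v_component:
  assumes t: "t \<in> {0, 1}" and j: "j \<in> {3..d}" and k: "k \<in> {3..d}" and "j \<noteq> k"
  shows "C t j j k = kdelta k 3 * C t 4 4 3"
proof (cases "k = 3")
  case True
  then show ?thesis
    using null_v_axis[OF t, of j] j \<open>j \<noteq> k\<close> by (simp add: kdelta_def)
next
  case False
  then have "k \<in> {4..d}" using k by auto
  then have "C t j j k = 0"
    using t j \<open>j \<noteq> k\<close> by (intro vanishes_if_odd_in_axis[of k j]) (auto simp: axis_sign_def fidx_def)
  then show ?thesis using False by (simp add: kdelta_def)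
qed

lemma null_v:
  assumes t: "t \<in> {0, 1}" and k: "k \<in> {3..d}"
  shows "(1 / (Nd d - 1)) * (\<Sum>i\<in>{3..d}. C t i i k) = kdelta k 3 * C t 4 4 3"
proof -
  have "C t k k k = 0"
    using t k by (intro zero_if_second_pair_eq) (auto simp: fidx_def)
  have "(\<Sum>i\<in>{3..d}. C t i i k) = C t k k k + (\<Sum>i\<in>{3..d} - {k}. C t i i k)"
    by (rule sum.remove) (use k in auto)
  also have "(\<Sum>i\<in>{3..d} - {k}. C t i i k) = (\<Sum>i\<in>{3..d} - {k}. kdelta k 3 * C t 4 4 3)"
    using k by (intro sum.cong refl null_v_component[OF t]) auto
  also have "\<dots> = real (card ({3..d} - {k})) * (kdelta k 3 * C t 4 4 3)"
    by simp
  also have "card ({3..d} - {k}) = d - 3"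
    using k by (simp add: card_Diff_singleton)
  also have "real (d - 3) = real d - 3"
    using dim by (simp add: of_nat_diff)
  finally have sum: "(\<Sum>i\<in>{3..d}. C t i i k) = (real d - 3) * (kdelta k 3 * C t 4 4 3)"
    using \<open>C t k k k = 0\<close> by simp
  have Nd: "Nd d - 1 = real d - 3"
    by (simp add: Nd_def)
  have "real d - 3 \<noteq> 0"
    using dim by simp
  then show ?thesis
    unfolding sum Nd by simp
qed

text \<open>Transpositions make \<open>C\<^sub>a\<^sub>i\<^sub>j\<^sub>k\<close> alternating in \<open>i, j, k\<close>, so the Bianchi identity reads
  \<open>3 C\<^sub>a\<^sub>i\<^sub>j\<^sub>k = 0\<close>.\<close>
lemma vanishes_on_distinct_axes:
  assumes a: "a \<in> fidx d" "a \<notin> {i, j, k}"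
    and ijk: "i \<in> {4..d}" "j \<in> {4..d}" "k \<in> {4..d}" "i \<noteq> j" "j \<noteq> k" "i \<noteq> k"
  shows "C a i j k = 0"
proof -
  have F: "i \<in> fidx d" "j \<in> fidx d" "k \<in> fidx d"
    using ijk by (auto simp: fidx_def)
  have "C a i j k = axis_sign j a * axis_sign j i * axis_sign j j * axis_sign j k
      * C (transpose i j a) (transpose i j i) (transpose i j j) (transpose i j k)"
    by (rule swap_invariance) (use a ijk F in auto)
  then have swap_ij: "C a i j k = - C a j i k"
    using a ijk by (simp add: axis_sign_def)
  have "C a k i j = axis_sign i a * axis_sign i k * axis_sign i i * axis_sign i j
      * C (transpose k i a) (transpose k i k) (transpose k i i) (transpose k i j)"
    by (rule swap_invariance) (use a ijk F in auto)
  then have swap_ki: "C a k i j = - C a i k j"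
    using a ijk by (simp add: axis_sign_def)
  have "C a i j k + C a j k i + C a k i j = 0"
    using a F by (intro first_bianchi)
  moreover have "C a j k i = - C a j i k" "C a i k j = - C a i j k"
    using a F by (auto intro: antisym_right)
  ultimately show ?thesis
    using swap_ij swap_ki by simp
qed

lemma null_T_distinct:
  assumes t: "t \<in> {0, 1}" and ijk: "i \<in> {3..d}" "j \<in> {3..d}" "k \<in> {3..d}"
    and distinct: "i \<noteq> j" "j \<noteq> k" "i \<noteq> k"
  shows "C t i j k = 0"
proof -
  consider "i = 3" | "j = 3" | "k = 3" | "i \<in> {4..d}" "j \<in> {4..d}" "k \<in> {4..d}"
    using ijk by force
  then show ?thesis
  proof cases
    case 1
    then show ?thesis
      using t ijk distinct by (intro vanishes_if_odd_in_axis[of j k]) (auto simp: axis_sign_def fidx_def)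
  next
    case 2
    then show ?thesis
      using t ijk distinct by (intro vanishes_if_odd_in_axis[of i k]) (auto simp: axis_sign_def fidx_def)
  next
    case 3
    then show ?thesis
      using t ijk distinct by (intro vanishes_if_odd_in_axis[of i j]) (auto simp: axis_sign_def fidx_def)
  next
    case 4
    then show ?thesis
      using t distinct by (intro vanishes_on_distinct_axes) (auto simp: fidx_def)
  qed
qed

lemma null_T:
  assumes t: "t \<in> {0, 1}" and ijk: "i \<in> {3..d}" "j \<in> {3..d}" "k \<in> {3..d}"
  shows "C t i j k = kdelta i j * (kdelta k 3 * C t 4 4 3) - kdelta i k * (kdelta j 3 * C t 4 4 3)"
proof -
  have F: "t \<in> fidx d" "i \<in> fidx d" "j \<in> fidx d" "k \<in> fidx d"
    using t ijk by (auto simp: fidx_def)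
  consider "j = k" | "i = j" "j \<noteq> k" | "i = k" "j \<noteq> k" | "i \<noteq> j" "j \<noteq> k" "i \<noteq> k"
    by blast
  then show ?thesis
  proof cases
    case 1
    then show ?thesis using zero_if_second_pair_eq[of t i k] F by (simp add: kdelta_def)
  next
    case 2
    then show ?thesis using null_v_component[OF t ijk(2,3)] by (simp add: kdelta_def)
  next
    case 3
    have "C t i j k = - C t k k j"
      using 3 F antisym_right[of t k j k] by simp
    then show ?thesis using 3 null_v_component[OF t ijk(3,2)] by (simp add: kdelta_def)
  next
    case 4
    then show ?thesis using null_T_distinct[OF t ijk] by (simp add: kdelta_def)
  qed
qed

lemma A_zero:
  assumes i: "i \<in> {3..d}" and j: "j \<in> {3..d}"
  shows "C 0 1 i j = 0"
proof -
  consider "i = j" | "i \<noteq> j" "i \<in> {4..d}" | "i \<noteq> j" "j \<in> {4..d}"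
    using i j by force
  then show ?thesis
  proof cases
    case 1
    then show ?thesis using i zero_if_second_pair_eq[of 0 1 i] by (simp add: fidx_def)
  next
    case 2
    then show ?thesis
      using j by (intro vanishes_if_odd_in_axis[of i j]) (auto simp: axis_sign_def fidx_def)
  next
    case 3
    then show ?thesis
      using i by (intro vanishes_if_odd_in_axis[of j i]) (auto simp: axis_sign_def fidx_def)
  qed
qed

lemma spatial_two_axes:
  assumes x: "x \<in> {4..d}" and y: "y \<in> {4..d}" and "x \<noteq> y"
  shows "C x y x y = C 4 5 4 5"
proof -
  have 4: "(4::nat) \<in> {4..d}" and 5: "(5::nat) \<in> {4..d}" using dim by auto
  define y' where "y' = transpose x 4 y"
  have y': "y' \<in> {4..d}" "y' \<noteq> 4"
    using x y \<open>x \<noteq> y\<close> 4 by (auto simp: y'_def transpose_def)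
  have "C x y x y = C 4 y' 4 y'"
    using pair_swap_invariance[OF x 4, of x y] x y by (simp add: y'_def fidx_def)
  also have "\<dots> = C 4 5 4 5"
    using pair_swap_invariance[OF y'(1) 5, of 4 y'] y' 4 by (simp add: fidx_def)
  finally show ?thesis .
qed

lemma spatial_ijij:
  assumes i: "i \<in> {3..d}" and j: "j \<in> {3..d}" and "i \<noteq> j"
  shows "C i j i j = invariant_curv (C 3 4 3 4) (C 4 5 4 5) i j i j"
proof -
  have F: "i \<in> fidx d" "j \<in> fidx d" using i j by (auto simp: fidx_def)
  consider "i = 3" "j \<in> {4..d}" | "j = 3" "i \<in> {4..d}" | "i \<in> {4..d}" "j \<in> {4..d}"
    using i j \<open>i \<noteq> j\<close> by force
  then show ?thesis
  proof cases
    case 1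
    then show ?thesis using pair_component_eq_axis4[of 3 j]
      by (simp add: invariant_curv_def transverse_proj_def kdelta_def)
  next
    case 2
    have "C i j i j = C j i j i" using F by (intro swap_both_pairs)
    then show ?thesis using 2 pair_component_eq_axis4[of 3 i]
      by (simp add: invariant_curv_def transverse_proj_def kdelta_def)
  next
    case 3
    then show ?thesis using spatial_two_axes[of i j] \<open>i \<noteq> j\<close>
      by (auto simp: invariant_curv_def transverse_proj_def kdelta_def)
  qed
qed

lemma spatial_ijik_zero:
  assumes pqr: "p \<in> {3..d}" "q \<in> {3..d}" "r \<in> {3..d}" and distinct: "p \<noteq> q" "p \<noteq> r" "q \<noteq> r"
  shows "C p q p r = 0"
proof -
  have F: "p \<in> fidx d" "q \<in> fidx d" "r \<in> fidx d"
    using pqr by (auto simp: fidx_def)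
  consider "q \<in> {4..d}" "r \<in> {4..d}" | "q = 3" | "r = 3"
    using pqr by force
  then show ?thesis
  proof cases
    case 1
    have "C p q p r = axis_sign r p * axis_sign r q * axis_sign r p * axis_sign r r
        * C (transpose q r p) (transpose q r q) (transpose q r p) (transpose q r r)"
      using 1 distinct F by (intro swap_invariance) auto
    also have "\<dots> = - C p r p q"
      using distinct by (simp add: axis_sign_def)
    also have "C p r p q = C p q p r"
      using F by (intro pair_sym)
    finally show ?thesis by simp
  next
    case 2
    then show ?thesis
      using pqr distinct by (intro vanishes_if_odd_in_axis[of r p]) (auto simp: axis_sign_def fidx_def)
  next
    case 3
    then show ?thesis
      using pqr distinct by (intro vanishes_if_odd_in_axis[of q p]) (auto simp: axis_sign_def fidx_def)
  qed
qed

lemma spatial_distinct_zero: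
  assumes ijkl: "i \<in> {3..d}" "j \<in> {3..d}" "k \<in> {3..d}" "l \<in> {3..d}"
    and distinct: "i \<noteq> j" "i \<noteq> k" "i \<noteq> l" "j \<noteq> k" "j \<noteq> l" "k \<noteq> l"
  shows "C i j k l = 0"
proof -
  have F: "i \<in> fidx d" "j \<in> fidx d" "k \<in> fidx d" "l \<in> fidx d"
    using ijkl by (auto simp: fidx_def)
  have axis: "x \<in> {4..d}" if "x \<in> {3..d}" "x \<noteq> 3" for x
    using that by auto
  consider "j \<noteq> 3" "k \<noteq> 3" "l \<noteq> 3" | "i \<noteq> 3" "k \<noteq> 3" "l \<noteq> 3" | "i \<noteq> 3" "j \<noteq> 3" "l \<noteq> 3"
    | "i \<noteq> 3" "j \<noteq> 3" "k \<noteq> 3"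
    using distinct by blast
  then show ?thesis
  proof cases
    case 1
    show ?thesis
      using distinct by (intro vanishes_on_distinct_axes[OF F(1) _ axis[OF ijkl(2) 1(1)]
          axis[OF ijkl(3) 1(2)] axis[OF ijkl(4) 1(3)]]) auto
  next
    case 2
    have "C j i k l = 0"
      using distinct by (intro vanishes_on_distinct_axes[OF F(2) _ axis[OF ijkl(1) 2(1)]
          axis[OF ijkl(3) 2(2)] axis[OF ijkl(4) 2(3)]]) auto
    then show ?thesis using antisym_left[OF F] by simp
  next
    case 3
    have "C k l i j = 0"
      using distinct by (intro vanishes_on_distinct_axes[OF F(3) _ axis[OF ijkl(4) 3(3)]
          axis[OF ijkl(1) 3(1)] axis[OF ijkl(2) 3(2)]]) auto
    then show ?thesis using pair_sym[OF F] by simp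
  next
    case 4
    have "C l k i j = 0"
      using distinct by (intro vanishes_on_distinct_axes[OF F(4) _ axis[OF ijkl(3) 4(3)]
          axis[OF ijkl(1) 4(1)] axis[OF ijkl(2) 4(2)]]) auto
    then show ?thesis using pair_sym[OF F] antisym_left[OF F(4,3,1,2)] by simp
  qed
qed

lemma spatial_offpair_zero:
  assumes ijkl: "i \<in> {3..d}" "j \<in> {3..d}" "k \<in> {3..d}" "l \<in> {3..d}"
    and "i \<noteq> j" "k \<noteq> l" and other_pair: "\<not> (k = i \<and> l = j)" "\<not> (k = j \<and> l = i)"
  shows "C i j k l = 0"
proof -
  have F: "i \<in> fidx d" "j \<in> fidx d" "k \<in> fidx d" "l \<in> fidx d"
    using ijkl by (auto simp: fidx_def)
  consider "i = k" | "i = l" | "j = k" | "j = l" | "i \<noteq> k" "i \<noteq> l" "j \<noteq> k" "j \<noteq> l"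
    by blast
  then show ?thesis
  proof cases
    case 1
    then show ?thesis
      using spatial_ijik_zero[of i j l] ijkl \<open>i \<noteq> j\<close> \<open>k \<noteq> l\<close> other_pair by auto
  next
    case 2
    have "C i j i k = 0"
      using 2 ijkl \<open>i \<noteq> j\<close> \<open>k \<noteq> l\<close> other_pair by (intro spatial_ijik_zero) auto
    then show ?thesis using 2 antisym_right[OF F] by simp
  next
    case 3
    have "C j i j l = 0"
      using 3 ijkl \<open>i \<noteq> j\<close> \<open>k \<noteq> l\<close> other_pair by (intro spatial_ijik_zero) auto
    then show ?thesis using 3 antisym_left[OF F] by simp
  next
    case 4
    have "C j i j k = 0"
      using 4 ijkl \<open>i \<noteq> j\<close> \<open>k \<noteq> l\<close> other_pair by (intro spatial_ijik_zero) auto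
    then show ?thesis using 4 swap_both_pairs[OF F] by simp
  next
    case 5
    then show ?thesis
      using ijkl \<open>i \<noteq> j\<close> \<open>k \<noteq> l\<close> by (intro spatial_distinct_zero) auto
  qed
qed

lemma spatial_components:
  assumes ijkl: "i \<in> {3..d}" "j \<in> {3..d}" "k \<in> {3..d}" "l \<in> {3..d}"
  shows "C i j k l = invariant_curv (C 3 4 3 4) (C 4 5 4 5) i j k l"
proof -
  have F: "i \<in> fidx d" "j \<in> fidx d" "k \<in> fidx d" "l \<in> fidx d"
    using ijkl by (auto simp: fidx_def)
  consider "i = j" | "k = l" | "i \<noteq> j" "k = i" "l = j" | "i \<noteq> j" "k = j" "l = i"
    | "i \<noteq> j" "k \<noteq> l" "\<not> (k = i \<and> l = j)" "\<not> (k = j \<and> l = i)"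
    by blast
  then show ?thesis
  proof cases
    case 1
    then show ?thesis using zero_if_first_pair_eq[OF F(1,3,4)]
      by (simp add: invariant_curv_def)
  next
    case 2
    then show ?thesis using zero_if_second_pair_eq[OF F(1,2,3)]
      by (simp add: invariant_curv_def)
  next
    case 3
    then show ?thesis using spatial_ijij[OF ijkl(1,2)] by simp
  next
    case 4
    then have "C i j k l = - C i j i j"
      using antisym_right[OF F] by simp
    then show ?thesis
      using 4 spatial_ijij[OF ijkl(1,2)] by (simp add: invariant_curv_def algebra_simps)
  next
    case 5
    then show ?thesis
      using spatial_offpair_zero[OF ijkl]
      by (auto simp: invariant_curv_def transverse_proj_def kdelta_def)
  qed
qed

lemma Rbar_spatial:
  assumes jl: "j \<in> {3..d}" "l \<in> {3..d}"
  shows "Rbar d C j l = ((real d - 4) * C 4 5 4 5 + C 3 4 3 4) * transverse_proj j l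
    + (real d - 3) * C 3 4 3 4 * kdelta j 3 * kdelta l 3"
proof -
  let ?\<alpha> = "C 3 4 3 4" and ?\<beta> = "C 4 5 4 5"
  note defs = invariant_curv_def transverse_proj_def kdelta_def
  have "Rbar d C j l = (\<Sum>k\<in>{3..d}. invariant_curv ?\<alpha> ?\<beta> k j k l)"
    unfolding Rbar_def sidx_def using jl by (intro sum.cong refl spatial_components) auto
  also have "\<dots> = ?\<alpha> * transverse_proj j l + (\<Sum>k\<in>{4..d}. invariant_curv ?\<alpha> ?\<beta> k j k l)"
    by (simp add: spatial_indices_eq_insert defs)
  also have "(\<Sum>k\<in>{4..d}. invariant_curv ?\<alpha> ?\<beta> k j k l)
      = (\<Sum>k\<in>{4..d}. (?\<beta> * transverse_proj j l + ?\<alpha> * kdelta j 3 * kdelta l 3)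
                      - ?\<beta> * (if k = j then kdelta j l else 0))"
    by (intro sum.cong refl) (auto simp: defs)
  also have "\<dots> = (real d - 3) * (?\<beta> * transverse_proj j l + ?\<alpha> * kdelta j 3 * kdelta l 3)
      - ?\<beta> * (if j \<in> {4..d} then kdelta j l else 0)"
    using dim by (simp add: sum_subtractf sum_distrib_left[symmetric] of_nat_diff)
  also have "(if j \<in> {4..d} then kdelta j l else 0) = transverse_proj j l"
    using jl by (auto simp: transverse_proj_def kdelta_def)
  finally show ?thesis
    by (simp add: algebra_simps)
qed

lemma Rbar_sc_spatial:
  "Rbar_sc d C = (real d - 3) * C 3 4 3 4 + (real d - 3) * ((real d - 4) * C 4 5 4 5 + C 3 4 3 4)"
proof -
  have "Rbar_sc d C = Rbar d C 3 3 + (\<Sum>i\<in>{4..d}. Rbar d C i i)"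
    unfolding Rbar_sc_def sidx_def by (simp add: spatial_indices_eq_insert)
  also have "Rbar d C 3 3 = (real d - 3) * C 3 4 3 4"
    using dim by (simp add: Rbar_spatial transverse_proj_def kdelta_def)
  also have "(\<Sum>i\<in>{4..d}. Rbar d C i i) = (\<Sum>i\<in>{4..d}. (real d - 4) * C 4 5 4 5 + C 3 4 3 4)"
    by (intro sum.cong refl) (auto simp: Rbar_spatial transverse_proj_def kdelta_def)
  finally show ?thesis
    using dim by (simp add: of_nat_diff)
qed

lemma Sbar_spatial:
  assumes ij: "i \<in> {3..d}" "j \<in> {3..d}"
  shows "Sbar d C i j = (Rbar_sc d C / Nd d - ((real d - 4) * C 4 5 4 5 + C 3 4 3 4)) * kappa d i j"
proof -
  have "real d - 2 \<noteq> 0" using dim by auto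
  then show ?thesis
    unfolding Sbar_def Rbar_spatial[OF ij] Rbar_sc_spatial Nd_def using ij
    by (auto simp: transverse_proj_def kdelta_def kappa_def field_simps)
qed

lemma Cbar_spatial_zero:
  assumes ijkl: "i \<in> {3..d}" "j \<in> {3..d}" "k \<in> {3..d}" "l \<in> {3..d}"
  shows "Cbar d C i j k l = 0"
proof -
  have n: "real d - 3 \<noteq> 0" "real d - 3 - 1 \<noteq> 0"
    using dim by auto
  have Nd: "Nd d = (real d - 3) + 1" and four: "real d - 4 = (real d - 3) - 1"
    by (simp_all add: Nd_def)
  show ?thesis
    unfolding Cbar_def spatial_components[OF ijkl] Rbar_spatial[OF ijkl(2,4)] Rbar_spatial[OF ijkl(2,3)]
      Rbar_spatial[OF ijkl(1,4)] Rbar_spatial[OF ijkl(1,3)] Rbar_sc_spatial Nd four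
      invariant_curv_def transverse_proj_def
    using weyl_part_invariant_curv_zero[where n = "real d - 3" and \<alpha> = "C 3 4 3 4" and \<beta> = "C 4 5 4 5"
        and dik = "kdelta i k" and djl = "kdelta j l" and dil = "kdelta i l" and djk = "kdelta j k"
        and ui = "kdelta i 3" and uj = "kdelta j 3" and uk = "kdelta k 3" and ul = "kdelta l 3", OF n]
    by simp
qed

end

theorem mainTheorem3:
  fixes d :: nat and C :: tensor4
  assumes "d > 5"
    and "is_weyl d C"
    and "so_invariant d C"
  shows "\<exists>lc lh vc vh s R.
    (\<forall>i\<in>sidx d. \<forall>j\<in>sidx d. Hcheck C i j = lc * kappa d i j) \<and>
    (\<forall>i\<in>sidx d. \<forall>j\<in>sidx d. \<forall>k\<in>sidx d. Tcheck d C i j k = 0) \<and>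
    (\<forall>i\<in>sidx d. vcheck d C i = kdelta i 3 * vc) \<and>
    (\<forall>i\<in>sidx d. \<forall>j\<in>sidx d. Amat C i j = 0) \<and>
    (\<forall>i\<in>sidx d. \<forall>j\<in>sidx d. Sbar d C i j = s * kappa d i j) \<and>
    Rbar_sc d C = R \<and>
    (\<forall>i\<in>sidx d. \<forall>j\<in>sidx d. \<forall>k\<in>sidx d. \<forall>l\<in>sidx d. Cbar d C i j k l = 0) \<and>
    (\<forall>i\<in>sidx d. \<forall>j\<in>sidx d. Hhat C i j = lh * kappa d i j) \<and>
    (\<forall>i\<in>sidx d. \<forall>j\<in>sidx d. \<forall>k\<in>sidx d. That d C i j k = 0) \<and>
    (\<forall>i\<in>sidx d. vhat d C i = kdelta i 3 * vh)"
proof -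
  interpret so_invariant_weyl d C
    using assms by unfold_locales
  have null: "(0::nat) \<in> {0, 1}" "(1::nat) \<in> {0, 1}"
    by simp_all
  have vcheck: "\<forall>i\<in>sidx d. vcheck d C i = kdelta i 3 * C 1 4 4 3"
    and vhat: "\<forall>i\<in>sidx d. vhat d C i = kdelta i 3 * C 0 4 4 3"
    using null_v[OF null(2)] null_v[OF null(1)] by (simp_all add: vcheck_def vhat_def sidx_def)
  have "\<forall>i\<in>sidx d. \<forall>j\<in>sidx d. Hcheck C i j = - C 1 4 1 4 * kappa d i j"
    and "\<forall>i\<in>sidx d. \<forall>j\<in>sidx d. Hhat C i j = - C 0 4 0 4 * kappa d i j"
    using null_H[OF null(2)] null_H[OF null(1)] by (simp_all add: Hcheck_def Hhat_def sidx_def)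
  moreover have "\<forall>i\<in>sidx d. \<forall>j\<in>sidx d. \<forall>k\<in>sidx d. Tcheck d C i j k = 0"
    and "\<forall>i\<in>sidx d. \<forall>j\<in>sidx d. \<forall>k\<in>sidx d. That d C i j k = 0"
    using vcheck vhat null_T[OF null(2)] null_T[OF null(1)] by (simp_all add: Tcheck_def That_def sidx_def)
  moreover have "\<forall>i\<in>sidx d. \<forall>j\<in>sidx d. Amat C i j = 0"
    using A_zero by (simp add: Amat_def sidx_def)
  moreover have "\<forall>i\<in>sidx d. \<forall>j\<in>sidx d.
      Sbar d C i j = (Rbar_sc d C / Nd d - ((real d - 4) * C 4 5 4 5 + C 3 4 3 4)) * kappa d i j"
    using Sbar_spatial by (simp add: sidx_def)
  moreover have "\<forall>i\<in>sidx d. \<forall>j\<in>sidx d. \<forall>k\<in>sidx d. \<forall>l\<in>sidx d. Cbar d C i j k l = 0"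
    using Cbar_spatial_zero by (simp add: sidx_def)
  ultimately show ?thesis
    using vcheck vhat by blast
qed

end
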